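(* Let $(G,V,f)$ be an instance of coset identification and let $\mathcal{A}$ be a $t$-query adaptive algorithm with no workspace, given by a unit vector $\psi\in V$, unitaries $U_1,\dots,U_t$ on $V$ and a POVM $\{E_x\}_{x\in X}$ on $V$. Define the algorithm $\mathcal{A}'$ on $V\otimes\mathbb{C}G$ with input $|\psi\rangle\otimes|\eta\rangle$, where $|\eta\rangle=|G|^{-1/2}\sum_{g\in G}|g\rangle$, intermediate unitaries $(U_i\otimes I)\circ CM$ ($i=1,\dots,t$), oracle $\pi(a)\otimes I$, and POVM $E'_x=\sum_{g\in G}E_{g^{-1}x}\otimes|g\rangle\langle g|$; i.e. on hidden $a$ it produces $(U_t\otimes I)CM(\pi(a)\otimes I)\cdots(U_1\otimes I)CM(\pi(a)\otimes I)|\psi,\eta\rangle$ and measures with $\{E'_x\}$. Then $\mathcal{A}'$ has the same average success probability as $\mathcal{A}$.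
   Context: Coset identification: $G$ finite group, $\pi:G\to U(V)$ a finite-dimensional unitary representation, $f:G\to X$ a surjective map of left $G$-sets onto a transitive $G$-set $X$. $CM$ is the operator on $V\otimes\mathbb{C}G$ with $CM|v,g\rangle=|\pi(g^{-1})v,g\rangle$, where $\mathbb{C}G$ has orthonormal basis $\{|g\rangle\}$. For an algorithm producing state $\psi_a$ on hidden $a$ with POVM $\{E_x\}$, the average success probability is $\frac1{|G|}\sum_a\langle\psi_a|E_{f(a)}|\psi_a\rangle$; for $\mathcal{A}$ the state is $U_t\pi(a)\cdots U_1\pi(a)\psi$. *)

theory Defs
  imports "HOL-Analysis.Analysis"
begin

text \<open>Finite-dimensional complex Hilbert spaces are modelled as \<open>complex ^ 'n\<close>
  for a finite index type 'n (orthonormal basis indexed by 'n); operators are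
  matrices \<open>complex ^ 'n ^ 'n\<close>.  The group G is a finite type of class
  \<open>group_add\<close> (not necessarily commutative), written additively:
  product \<open>g + h\<close>, inverse \<open>- g\<close>, identity \<open>0\<close>.\<close>

definition cinner :: "complex ^ 'n \<Rightarrow> complex ^ 'n \<Rightarrow> complex" where
  "cinner u v = (\<Sum>i\<in>UNIV. cnj (u $ i) * v $ i)"

definition adj :: "complex ^ 'n ^ 'm \<Rightarrow> complex ^ 'm ^ 'n" where
  "adj A = (\<chi> i j. cnj (A $ j $ i))"

definition unitary :: "complex ^ 'n ^ 'n \<Rightarrow> bool" where
  "unitary U \<longleftrightarrow> adj U ** U = mat 1 \<and> U ** adj U = mat 1"

definition positive_op :: "complex ^ 'n ^ 'n \<Rightarrow> bool" where
  "positive_op A \<longleftrightarrow> (\<forall>v. Im (cinner v (A *v v)) = 0 \<and> Re (cinner v (A *v v)) \<ge> 0)"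

definition povm :: "('x::finite \<Rightarrow> complex ^ 'n ^ 'n) \<Rightarrow> bool" where
  "povm E \<longleftrightarrow> (\<forall>x. positive_op (E x)) \<and> (\<Sum>x\<in>UNIV. E x) = mat 1"

definition unitary_rep :: "('g::group_add \<Rightarrow> complex ^ 'n ^ 'n) \<Rightarrow> bool" where
  "unitary_rep \<pi> \<longleftrightarrow> (\<forall>g. unitary (\<pi> g)) \<and> (\<forall>g h. \<pi> (g + h) = \<pi> g ** \<pi> h)"

definition gset_action :: "('g::group_add \<Rightarrow> 'x \<Rightarrow> 'x) \<Rightarrow> bool" where
  "gset_action act \<longleftrightarrow> (\<forall>x. act 0 x = x) \<and> (\<forall>g h x. act (g + h) x = act g (act h x))"

definition transitive_action :: "('g \<Rightarrow> 'x \<Rightarrow> 'x) \<Rightarrow> bool" where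
  "transitive_action act \<longleftrightarrow> (\<forall>x y. \<exists>g. act g x = y)"

definition gset_map :: "('g::group_add \<Rightarrow> 'x \<Rightarrow> 'x) \<Rightarrow> ('g \<Rightarrow> 'x) \<Rightarrow> bool" where
  "gset_map act f \<longleftrightarrow> (\<forall>g a. f (g + a) = act g (f a))"

text \<open>Tensor products of operators and vectors; basis of V \<otimes> CG indexed by 'n \<times> 'g.\<close>
definition tensor :: "complex ^ 'n ^ 'n \<Rightarrow> complex ^ 'm ^ 'm \<Rightarrow> complex ^ ('n \<times> 'm) ^ ('n \<times> 'm)" where
  "tensor A B = (\<chi> p q. A $ fst p $ fst q * B $ snd p $ snd q)"

definition tensor_vec :: "complex ^ 'n \<Rightarrow> complex ^ 'm \<Rightarrow> complex ^ ('n \<times> 'm)" where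
  "tensor_vec u v = (\<chi> p. u $ fst p * v $ snd p)"

definition ket :: "'g \<Rightarrow> complex ^ 'g" where
  "ket g = axis g 1"

definition outer :: "complex ^ 'n \<Rightarrow> complex ^ 'n \<Rightarrow> complex ^ 'n ^ 'n" where
  "outer u v = (\<chi> i j. u $ i * cnj (v $ j))"

definition eta :: "complex ^ ('g::finite)" where
  "eta = of_real (1 / sqrt (real CARD('g))) *s (\<Sum>g\<in>UNIV. ket g)"

text \<open>CM |v,g> = |pi(g^-1) v, g>, i.e. CM = sum_g pi(g^-1) \<otimes> |g><g|.\<close>
definition CM :: "('g::{group_add,finite} \<Rightarrow> complex ^ 'n ^ 'n) \<Rightarrow> complex ^ ('n \<times> 'g) ^ ('n \<times> 'g)" where
  "CM \<pi> = (\<Sum>g\<in>UNIV. tensor (\<pi> (- g)) (outer (ket g) (ket g)))"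

text \<open>Adaptive t-query algorithm without workspace: with Us = [U_1,...,U_t] and oracle O,
  the final state is U_t O ... U_1 O psi.\<close>
fun run :: "(complex ^ 'n ^ 'n) list \<Rightarrow> complex ^ 'n ^ 'n \<Rightarrow> complex ^ 'n \<Rightarrow> complex ^ 'n" where
  "run [] Or psi = psi"
| "run (U # Us) Or psi = run Us Or (U *v (Or *v psi))"

definition avg_success :: "('g::finite \<Rightarrow> complex ^ 'n) \<Rightarrow> ('x \<Rightarrow> complex ^ 'n ^ 'n) \<Rightarrow> ('g \<Rightarrow> 'x) \<Rightarrow> complex" where
  "avg_success st E f = (1 / of_nat CARD('g)) * (\<Sum>a\<in>UNIV. cinner (st a) (E (f a) *v st a))"

definition E' :: "('g::{group_add,finite} \<Rightarrow> 'x \<Rightarrow> 'x) \<Rightarrow> ('x \<Rightarrow> complex ^ 'n ^ 'n) \<Rightarrow> 'x \<Rightarrow> complex ^ ('n \<times> 'g) ^ ('n \<times> 'g)" where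
  "E' act E x = (\<Sum>g\<in>UNIV. tensor (E (act (- g) x)) (outer (ket g) (ket g)))"

end

theory Submission imports Defs begin

text \<open>On hidden \<open>a\<close>, the \<open>|g\<rangle>\<close>-component of every intermediate state of \<open>\<A>'\<close> is
  \<open>|G|\<^sup>-\<^sup>1\<^sup>/\<^sup>2\<close> times the corresponding state of \<open>\<A>\<close> on hidden \<open>g\<^sup>-\<^sup>1a\<close>, because \<open>CM\<close>
  applies \<open>\<pi>(g\<^sup>-\<^sup>1)\<close> to that component right after each query \<open>\<pi>(a)\<close>.  On it, \<open>E'(f a)\<close>
  acts as \<open>E(g\<^sup>-\<^sup>1 f a) = E(f(g\<^sup>-\<^sup>1a))\<close>, so the success probability of \<open>\<A>'\<close> on \<open>a\<close> is the
  mean over \<open>g\<close> of that of \<open>\<A>\<close> on \<open>g\<^sup>-\<^sup>1a\<close>; averaging over \<open>a\<close> as well only reindexes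
  the sum.\<close>

text \<open>\<open>blockvec F\<close> is the vector \<open>\<Sum>\<^sub>g F g \<otimes> |g\<rangle>\<close> of \<open>V \<otimes> \<complex>G\<close>.\<close>

definition blockvec :: "('g::finite \<Rightarrow> complex ^ 'n) \<Rightarrow> complex ^ ('n \<times> 'g)" where
  "blockvec F = (\<chi> p. F (snd p) $ fst p)"

lemma if_mult_distrib:
  fixes z :: complex
  shows "(if b then x else y) * z = (if b then x * z else y * z)"
    and "z * (if b then x else y) = (if b then z * x else z * y)"
  by simp_all

lemma sum_UNIV_prod:
  "(\<Sum>p\<in>(UNIV::('a::finite \<times> 'b::finite) set). h p) = (\<Sum>j\<in>UNIV. \<Sum>g\<in>UNIV. h (j, g))"
  by (simp add: sum.cartesian_product flip: UNIV_Times_UNIV)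

lemma tensor_id_mult_blockvec: "tensor A (mat 1) *v blockvec F = blockvec (\<lambda>g. A *v F g)"
  by (simp add: vec_eq_iff matrix_vector_mult_def tensor_def blockvec_def sum_UNIV_prod
      mat_def if_mult_distrib cong: if_cong)

lemma block_diagonal_entry:
  "(\<Sum>h\<in>UNIV. tensor (B h) (outer (ket h) (ket h))) $ (i, g) $ (j, g') = (if g = g' then B g $ i $ j else 0)"
  by (simp add: tensor_def outer_def ket_def axis_def if_mult_distrib cong: if_cong)

lemma block_diagonal_mult_blockvec:
  "(\<Sum>h\<in>UNIV. tensor (B h) (outer (ket h) (ket h))) *v blockvec F = blockvec (\<lambda>g. B g *v F g)"
proof -
  have "((\<Sum>h\<in>UNIV. tensor (B h) (outer (ket h) (ket h))) *v blockvec F) $ (i, g)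
        = blockvec (\<lambda>g. B g *v F g) $ (i, g)" for i g
    unfolding matrix_vector_mult_def
    by (simp only: vec_lambda_beta sum_UNIV_prod block_diagonal_entry)
       (simp add: blockvec_def matrix_vector_mult_def if_mult_distrib cong: if_cong)
  then show ?thesis
    by (simp add: vec_eq_iff)
qed

lemma cinner_blockvec: "cinner (blockvec F) (blockvec H) = (\<Sum>g\<in>UNIV. cinner (F g) (H g))"
  unfolding cinner_def blockvec_def sum_UNIV_prod by (subst sum.swap) simp

lemma cinner_scale_both:
  "cinner (c *s u) (A *v (c *s u)) = cnj c * c * cinner u (A *v u)"
  by (simp add: cinner_def vector_scalar_commute sum_distrib_left algebra_simps)

lemma tensor_vec_eta:
  "tensor_vec psi (eta :: complex ^ 'g::finite) = blockvec (\<lambda>g. of_real (1 / sqrt CARD('g)) *s psi)"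
  by (simp add: tensor_vec_def eta_def blockvec_def ket_def vec_eq_iff axis_def mult.commute)

lemma run_scale: "run Us Or (c *s x) = c *s run Us Or x"
  by (induction Us arbitrary: x) (simp_all add: vector_scalar_commute)

lemma CM_mult_blockvec: "CM \<pi> *v blockvec F = blockvec (\<lambda>g. \<pi> (- g) *v F g)"
  unfolding CM_def block_diagonal_mult_blockvec ..

lemma run_controlled_blockvec:
  assumes "\<And>g h. \<pi> (g + h) = \<pi> g ** \<pi> h"
  shows "run (map (\<lambda>U. tensor U (mat 1) ** CM \<pi>) Us) (tensor (\<pi> a) (mat 1)) (blockvec F)
       = blockvec (\<lambda>g. run Us (\<pi> (- g + a)) (F g))"
proof (induction Us arbitrary: F)
  case Nil
  then show ?case by simp
next
  case (Cons U Us)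
  have "(tensor U (mat 1) ** CM \<pi>) *v (tensor (\<pi> a) (mat 1) *v blockvec F)
        = tensor U (mat 1) *v (CM \<pi> *v (tensor (\<pi> a) (mat 1) *v blockvec F))"
    by (simp add: matrix_vector_mul_assoc matrix_mul_assoc)
  also have "\<dots> = blockvec (\<lambda>g. U *v (\<pi> (- g) *v (\<pi> a *v F g)))"
    by (simp add: tensor_id_mult_blockvec CM_mult_blockvec)
  also have "\<dots> = blockvec (\<lambda>g. U *v (\<pi> (- g + a) *v F g))"
    by (simp add: assms matrix_vector_mul_assoc)
  finally show ?case
    using Cons by simp
qed

lemma cinner_E'_blockvec:
  "cinner (blockvec F) (E' act E x *v blockvec F) = (\<Sum>g\<in>UNIV. cinner (F g) (E (act (- g) x) *v F g))"
  unfolding E'_def block_diagonal_mult_blockvec cinner_blockvec ..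

lemma sum_left_translate:
  fixes g :: "'g::{group_add,finite}"
  shows "(\<Sum>a\<in>UNIV. h (g + a)) = (\<Sum>b\<in>UNIV. h b)"
  by (rule sum.reindex_bij_witness[where i = "\<lambda>b. - g + b" and j = "\<lambda>a. g + a"])
     (simp_all add: add.assoc[symmetric])

theorem lemma5:
  fixes \<pi> :: "'g::{group_add,finite} \<Rightarrow> complex ^ 'n ^ 'n"
    and act :: "'g \<Rightarrow> 'x::finite \<Rightarrow> 'x"
    and f :: "'g \<Rightarrow> 'x"
    and psi :: "complex ^ 'n"
    and Us :: "(complex ^ 'n ^ 'n) list"
    and E :: "'x \<Rightarrow> complex ^ 'n ^ 'n"
  assumes "unitary_rep \<pi>"
    and "gset_action act" and "transitive_action act"
    and "gset_map act f" and "surj f"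
    and "norm psi = 1"
    and "\<forall>U\<in>set Us. unitary U"
    and "povm E"
  shows "avg_success
           (\<lambda>a. run (map (\<lambda>U. tensor U (mat 1) ** CM \<pi>) Us) (tensor (\<pi> a) (mat 1))
                  (tensor_vec psi eta))
           (E' act E) f
       = avg_success (\<lambda>a. run Us (\<pi> a) psi) E f"
proof -
  have hom: "\<And>g h. \<pi> (g + h) = \<pi> g ** \<pi> h" and equivariant: "\<And>g a. f (g + a) = act g (f a)"
    using assms(1,4) unfolding unitary_rep_def gset_map_def by blast+
  define c :: complex where "c = of_real (1 / sqrt CARD('g))"
  define N :: complex where "N = of_nat CARD('g)"
  define p where "p b = cinner (run Us (\<pi> b) psi) (E (f b) *v run Us (\<pi> b) psi)" for b
  define st' where "st' a = run (map (\<lambda>U. tensor U (mat 1) ** CM \<pi>) Us) (tensor (\<pi> a) (mat 1))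
                               (tensor_vec psi eta)" for a
  have "st' a = blockvec (\<lambda>g. c *s run Us (\<pi> (- g + a)) psi)" for a
    by (simp add: st'_def c_def tensor_vec_eta run_controlled_blockvec[OF hom] run_scale)
  moreover have "cnj c * c = 1 / N"
    unfolding c_def N_def complex_cnj_complex_of_real of_real_mult[symmetric] by simp
  ultimately have success_on: "cinner (st' a) (E' act E (f a) *v st' a) = (\<Sum>g\<in>UNIV. p (- g + a)) / N" for a
    by (simp add: cinner_E'_blockvec cinner_scale_both equivariant p_def sum_divide_distrib)
  have "(\<Sum>a\<in>UNIV. (\<Sum>g\<in>UNIV. p (- g + a)) / N) = (\<Sum>g\<in>UNIV. \<Sum>a\<in>UNIV. p (- g + a)) / N"
    unfolding sum_divide_distrib by (rule sum.swap)
  also have "\<dots> = (\<Sum>b\<in>UNIV. p b)"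
    by (simp add: sum_left_translate N_def)
  finally show ?thesis
    by (simp add: avg_success_def success_on p_def flip: st'_def)
qed

end
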